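(* Let $V$ be a real inner product space with norm $\lVert x\rVert=\sqrt{\langle x,x\rangle}$, and consider $n$ agents running the MidExtremes algorithm (described in the context) under an arbitrary communication pattern $G_1,G_2,\dots$ in which every communication graph $G_t$ is non-split, starting from arbitrary initial values $y_1(0),\dots,y_n(0)\in V$. Then for every round $t\ge 1$, \[ \Delta\big(y(t)\big)\le \sqrt{\tfrac{7}{8}}\;\Delta\big(y(t-1)\big), \] and for every $\varepsilon>0$ the convergence time satisfies $T(\varepsilon)\le \left\lceil \log_{\sqrt{8/7}} \frac{\Delta}{\varepsilon}\right\rceil$, where $\Delta=\Delta\big(y(0)\big)$ (i.e., $\Delta(y(\tau))\le\varepsilon$ for every integer $\tau\ge 0$ with $\tau\ge \lceil \log_{\sqrt{8/7}} (\Delta/\varepsilon)\rceil$). Moreover, if $V=\mathbb{R}$ (with the usual inner product), then $\Delta\big(y(t)\big)\le \tfrac12\,\Delta\big(y(t-1)\big)$ for every $t\ge1$, and $T(\varepsilon)\le \left\lceil \log_{2} \frac{\Delta}{\varepsilon}\right\rceil$.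
   Context: Dynamic network model: there are $n$ agents $1,\dots,n$ communicating in rounds $t=1,2,\dots$. In round $t$, communication is given by a directed graph $G_t$ on the vertex set $\{1,\dots,n\}$ containing every self-loop $(i,i)$; the message broadcast by $i$ in round $t$ is received by $j$ iff $(i,j)\in G_t$. A directed graph is non-split if every pair of nodes $i,j$ has a common in-neighbor $k$ (i.e., $(k,i)$ and $(k,j)$ are both edges). Each agent $i$ holds a value $y_i\in V$; $y_i(0)$ is its initial value and $y_i(t)$ its value at the end of round $t$; $y(t)=(y_1(t),\dots,y_n(t))$. MidExtremes algorithm: in round $t$ each agent $i$ broadcasts $y_i(t-1)$, lets $\mathrm{Rcv}_i(t)=\{y_j(t-1): (j,i)\in G_t\}$ be the set of received values, chooses a pair $(a,b)\in \mathrm{Rcv}_i(t)^2$ maximizing $\lVert a-b\rVert$ (ties broken arbitrarily), and sets $y_i(t)=(a+b)/2$. Notation: for $x=(x_1,\dots,x_n)\in V^n$, $\Delta(x)=\max_{i,j}\lVert x_i-x_j\rVert$. The convergence time of an execution is $T(\varepsilon)=\min\{t\ge0 : \forall \tau\ge t,\ \Delta(y(\tau))\le\varepsilon\}$. *)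

theory Defs
  imports "HOL-Analysis.Analysis"
begin

(* Agents are 0,...,n-1 (the paper's 1,...,n shifted). A communication graph is a set
   of directed edges (i,j) on {0..<n}. *)

definition comm_graph :: "nat \<Rightarrow> (nat \<times> nat) set \<Rightarrow> bool" where
  "comm_graph n E \<longleftrightarrow> E \<subseteq> {..<n} \<times> {..<n} \<and> (\<forall>i<n. (i, i) \<in> E)"

definition nonsplit :: "nat \<Rightarrow> (nat \<times> nat) set \<Rightarrow> bool" where
  "nonsplit n E \<longleftrightarrow> (\<forall>i<n. \<forall>j<n. \<exists>k<n. (k, i) \<in> E \<and> (k, j) \<in> E)"

definition rcv :: "nat \<Rightarrow> (nat \<times> nat) set \<Rightarrow> (nat \<Rightarrow> 'v) \<Rightarrow> nat \<Rightarrow> 'v set" where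
  "rcv n E x i = {x j | j. j < n \<and> (j, i) \<in> E}"

definition midext_round ::
  "nat \<Rightarrow> (nat \<times> nat) set \<Rightarrow> (nat \<Rightarrow> 'v::real_normed_vector) \<Rightarrow> (nat \<Rightarrow> 'v) \<Rightarrow> bool" where
  "midext_round n E x x' \<longleftrightarrow>
     (\<forall>i<n. \<exists>a\<in>rcv n E x i. \<exists>b\<in>rcv n E x i.
        (\<forall>c\<in>rcv n E x i. \<forall>d\<in>rcv n E x i. norm (c - d) \<le> norm (a - b)) \<and>
        x' i = (1/2) *\<^sub>R (a + b))"

definition midext_exec ::
  "nat \<Rightarrow> (nat \<Rightarrow> (nat \<times> nat) set) \<Rightarrow> (nat \<Rightarrow> nat \<Rightarrow> 'v::real_normed_vector) \<Rightarrow> bool" where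
  "midext_exec n G y \<longleftrightarrow> (\<forall>t\<ge>1. midext_round n (G t) (y (t - 1)) (y t))"

definition Delta :: "nat \<Rightarrow> (nat \<Rightarrow> 'v::real_normed_vector) \<Rightarrow> real" where
  "Delta n x = Max {norm (x i - x j) | i j. i < n \<and> j < n}"

end

theory Submission
  imports Defs
begin

(* In a non-split round any two agents i and j receive a common value z. Agent i moves to the
   midpoint of a diametral pair a, b of its received values, so z is within |a - b| of both a and b;
   likewise for j's pair c, d; and a, b, c, d are old values, hence pairwise within the old
   diameter D. With z as origin these quadratic constraints already force the two midpoints to be
   within sqrt (6/7) D <= sqrt (7/8) D of each other in any inner product space, and within D/2 on
   the real line, where z lies between a and b and between c and d. *)

lemma norm_diff_le_Delta:
  assumes "i < n" "j < n"
  shows "norm (x i - x j) \<le> Delta n x"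
  unfolding Delta_def using assms by (intro Max_ge finite_image_set2) auto

lemma Delta_le:
  assumes "n \<ge> 1" and "\<And>i j. i < n \<Longrightarrow> j < n \<Longrightarrow> norm (x i - x j) \<le> B"
  shows "Delta n x \<le> B"
proof -
  have "norm (x 0 - x 0) \<in> {norm (x i - x j) | i j. i < n \<and> j < n}"
    using assms(1) by (auto simp: Suc_le_eq)
  then show ?thesis
    unfolding Delta_def using assms(2) by (intro Max.boundedI finite_image_set2) auto
qed

lemma Delta_nonneg: "n \<ge> 1 \<Longrightarrow> 0 \<le> Delta n x"
  using norm_diff_le_Delta[where i=0 and j=0] by (auto simp: Suc_le_eq)

lemma dist_rcv_le_Delta:
  "u \<in> rcv n E x i \<Longrightarrow> v \<in> rcv n E x j \<Longrightarrow> dist u v \<le> Delta n x"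
  unfolding rcv_def dist_norm using norm_diff_le_Delta by blast

lemma midext_round_midpoint:
  assumes "midext_round n E x x'" "i < n"
  obtains a b where "a \<in> rcv n E x i" "b \<in> rcv n E x i"
    "\<And>c d. c \<in> rcv n E x i \<Longrightarrow> d \<in> rcv n E x i \<Longrightarrow> dist c d \<le> dist a b"
    "x' i = midpoint a b"
proof -
  obtain a b where ab: "a \<in> rcv n E x i" "b \<in> rcv n E x i"
    "\<forall>c\<in>rcv n E x i. \<forall>d\<in>rcv n E x i. norm (c - d) \<le> norm (a - b)"
    "x' i = (1/2) *\<^sub>R (a + b)"
    using assms unfolding midext_round_def by blast
  show thesis
  proof (rule that[OF ab(1,2)])
    show "dist c d \<le> dist a b" if "c \<in> rcv n E x i" "d \<in> rcv n E x i" for c d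
      using ab(3) that by (simp add: dist_norm)
    show "x' i = midpoint a b"
      using ab(4) by (simp add: midpoint_def inverse_eq_divide)
  qed
qed

lemma dist_midpoints_sq_le_origin:
  fixes a b c d :: "'v::real_inner"
  assumes "dist a c \<le> D" "dist a d \<le> D" "dist b c \<le> D" "dist b d \<le> D"
    and "norm a \<le> dist a b" "norm b \<le> dist a b"
    and "norm c \<le> dist c d" "norm d \<le> dist c d"
  shows "(dist (midpoint a b) (midpoint c d))\<^sup>2 \<le> 6/7 * D\<^sup>2"
proof -
  have "(dist a c)\<^sup>2 \<le> D\<^sup>2" "(dist a d)\<^sup>2 \<le> D\<^sup>2" "(dist b c)\<^sup>2 \<le> D\<^sup>2" "(dist b d)\<^sup>2 \<le> D\<^sup>2"
    "(norm a)\<^sup>2 \<le> (dist a b)\<^sup>2" "(norm b)\<^sup>2 \<le> (dist a b)\<^sup>2"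
    "(norm c)\<^sup>2 \<le> (dist c d)\<^sup>2" "(norm d)\<^sup>2 \<le> (dist c d)\<^sup>2"
    using assms by (simp_all add: power_mono)
  \<comment> \<open>(24/7) D^2 - |a + b - c - d|^2 is the sum of 6/7 times the four slacks D^2 - |a - c|^2, ...,
      4/7 times the four slacks |a - b|^2 - |a|^2, ..., and 1/7 |a + b + c + d|^2.\<close>
  then show ?thesis
    using inner_ge_zero[of "a + b + c + d"]
    by (simp add: midpoint_def dist_norm power2_norm_eq_inner inner_diff_left inner_diff_right
        inner_commute algebra_simps)
qed

lemma dist_midpoints_le_inner:
  fixes a b c d z :: "'v::real_inner"
  assumes "dist a c \<le> D" "dist a d \<le> D" "dist b c \<le> D" "dist b d \<le> D"
    and "dist z a \<le> dist a b" "dist z b \<le> dist a b"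
    and "dist z c \<le> dist c d" "dist z d \<le> dist c d"
  shows "dist (midpoint a b) (midpoint c d) \<le> sqrt (7/8) * D"
proof -
  have "0 \<le> D"
    using assms(1) zero_le_dist order_trans by blast
  have dist_translate: "dist (u - z) (v - z) = dist u v" "norm (u - z) = dist z u" for u v
    by (simp_all add: dist_norm norm_minus_commute)
  have midpoint_translate: "midpoint (u - z) (v - z) = midpoint u v - z" for u v
    unfolding midpoint_def by (simp add: algebra_simps flip: scaleR_2)
  have "(dist (midpoint a b) (midpoint c d))\<^sup>2 \<le> 6/7 * D\<^sup>2"
    using dist_midpoints_sq_le_origin[where a="a - z" and b="b - z" and c="c - z" and d="d - z"] assms
    by (simp only: dist_translate midpoint_translate)
  also have "\<dots> \<le> (sqrt (7/8) * D)\<^sup>2"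
    by (simp add: power_mult_distrib)
  finally show ?thesis
    by (rule power2_le_imp_le) (use \<open>0 \<le> D\<close> in simp)
qed

lemma dist_midpoints_le_real:
  fixes a b c d z :: real
  assumes "dist a c \<le> D" "dist a d \<le> D" "dist b c \<le> D" "dist b d \<le> D"
    and "dist z a \<le> dist a b" "dist z b \<le> dist a b"
    and "dist z c \<le> dist c d" "dist z d \<le> dist c d"
  shows "dist (midpoint a b) (midpoint c d) \<le> 1/2 * D"
proof -
  have "a \<le> z \<and> z \<le> b \<or> b \<le> z \<and> z \<le> a" "c \<le> z \<and> z \<le> d \<or> d \<le> z \<and> z \<le> c"
    using assms(5-8) by (auto simp: dist_real_def abs_le_iff)
  \<comment> \<open>so a + b - (c + d) is a sum of two cross differences of opposite signs\<close>
  then have "\<bar>a + b - (c + d)\<bar> \<le> D"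
    using assms(1-4) by (auto simp: dist_real_def abs_le_iff)
  then show ?thesis
    by (simp add: midpoint_def dist_real_def diff_divide_distrib[symmetric])
qed

lemma Delta_midext_round_le:
  fixes x x' :: "nat \<Rightarrow> 'v::real_normed_vector"
  assumes round: "midext_round n E x x'" and "nonsplit n E" "n \<ge> 1"
    and midpoints: "\<And>a b c d (z::'v) D. dist a c \<le> D \<Longrightarrow> dist a d \<le> D \<Longrightarrow> dist b c \<le> D \<Longrightarrow>
      dist b d \<le> D \<Longrightarrow> dist z a \<le> dist a b \<Longrightarrow> dist z b \<le> dist a b \<Longrightarrow>
      dist z c \<le> dist c d \<Longrightarrow> dist z d \<le> dist c d \<Longrightarrow>
      dist (midpoint a b) (midpoint c d) \<le> q * D"
  shows "Delta n x' \<le> q * Delta n x"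
proof (rule Delta_le[OF \<open>n \<ge> 1\<close>])
  fix i j assume "i < n" "j < n"
  then obtain k where "k < n" "(k, i) \<in> E" "(k, j) \<in> E"
    using \<open>nonsplit n E\<close> unfolding nonsplit_def by blast
  then have z: "x k \<in> rcv n E x i" "x k \<in> rcv n E x j"
    unfolding rcv_def by auto
  obtain a b where ab: "a \<in> rcv n E x i" "b \<in> rcv n E x i"
    "\<And>u v. u \<in> rcv n E x i \<Longrightarrow> v \<in> rcv n E x i \<Longrightarrow> dist u v \<le> dist a b"
    "x' i = midpoint a b"
    using midext_round_midpoint[OF round \<open>i < n\<close>] by blast
  obtain c d where cd: "c \<in> rcv n E x j" "d \<in> rcv n E x j"
    "\<And>u v. u \<in> rcv n E x j \<Longrightarrow> v \<in> rcv n E x j \<Longrightarrow> dist u v \<le> dist c d"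
    "x' j = midpoint c d"
    using midext_round_midpoint[OF round \<open>j < n\<close>] by blast
  have "dist (x' i) (x' j) \<le> q * Delta n x"
    unfolding ab(4) cd(4)
    by (rule midpoints[where z = "x k"]; meson dist_rcv_le_Delta ab(1-3) cd(1-3) z)
  then show "norm (x' i - x' j) \<le> q * Delta n x"
    by (simp add: dist_norm)
qed

lemma contraction_convergence_time:
  fixes Del :: "nat \<Rightarrow> real"
  assumes "r > 1" "q * r = 1" and step: "\<And>t. t \<ge> 1 \<Longrightarrow> Del t \<le> q * Del (t - 1)"
    and "0 \<le> Del 0" "\<epsilon> > 0" and "of_nat \<tau> \<ge> \<lceil>log r (Del 0 / \<epsilon>)\<rceil>"
  shows "Del \<tau> \<le> \<epsilon>"
proof -
  have "0 \<le> q"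
    using assms(1,2) zero_le_mult_iff[of q r] by auto
  have decay: "Del t \<le> q ^ t * Del 0" for t
  proof (induction t)
    case (Suc t)
    have "Del (Suc t) \<le> q * Del t"
      using step[of "Suc t"] by simp
    also have "\<dots> \<le> q * (q ^ t * Del 0)"
      using Suc \<open>0 \<le> q\<close> by (rule mult_left_mono)
    finally show ?case by simp
  qed simp
  show ?thesis
  proof (cases "Del 0 = 0")
    case True
    then show ?thesis using decay[of \<tau>] \<open>\<epsilon> > 0\<close> by simp
  next
    case False
    then have "Del 0 / \<epsilon> > 0"
      using \<open>0 \<le> Del 0\<close> \<open>\<epsilon> > 0\<close> by simp
    moreover have "log r (Del 0 / \<epsilon>) \<le> real \<tau>"
      using assms(6) by (simp add: ceiling_le_iff)
    ultimately have "Del 0 / \<epsilon> \<le> r ^ \<tau>"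
      using \<open>r > 1\<close> by (simp add: log_le_iff powr_realpow)
    then have "Del 0 \<le> r ^ \<tau> * \<epsilon>"
      using \<open>\<epsilon> > 0\<close> by (simp add: pos_divide_le_eq)
    have "Del \<tau> \<le> q ^ \<tau> * Del 0"
      by (rule decay)
    also have "\<dots> \<le> q ^ \<tau> * (r ^ \<tau> * \<epsilon>)"
      using \<open>Del 0 \<le> r ^ \<tau> * \<epsilon>\<close> \<open>0 \<le> q\<close> by (simp add: mult_left_mono)
    also have "\<dots> = (q * r) ^ \<tau> * \<epsilon>"
      by (simp add: power_mult_distrib)
    finally show ?thesis
      using \<open>q * r = 1\<close> by simp
  qed
qed

lemma midext_exec_contraction:
  fixes y :: "nat \<Rightarrow> nat \<Rightarrow> 'v::real_normed_vector"
  assumes "n \<ge> 1" "\<forall>t\<ge>1. nonsplit n (G t)" "midext_exec n G y" "r > 1" "q * r = 1"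
    and midpoints: "\<And>a b c d (z::'v) D. dist a c \<le> D \<Longrightarrow> dist a d \<le> D \<Longrightarrow> dist b c \<le> D \<Longrightarrow>
      dist b d \<le> D \<Longrightarrow> dist z a \<le> dist a b \<Longrightarrow> dist z b \<le> dist a b \<Longrightarrow>
      dist z c \<le> dist c d \<Longrightarrow> dist z d \<le> dist c d \<Longrightarrow>
      dist (midpoint a b) (midpoint c d) \<le> q * D"
  shows "(\<forall>t\<ge>1. Delta n (y t) \<le> q * Delta n (y (t - 1))) \<and>
    (\<forall>\<epsilon>>0. \<forall>\<tau>::nat.
      of_nat \<tau> \<ge> \<lceil>log r (Delta n (y 0) / \<epsilon>)\<rceil> \<longrightarrow> Delta n (y \<tau>) \<le> \<epsilon>)"
proof -
  have step: "Delta n (y t) \<le> q * Delta n (y (t - 1))" if "t \<ge> 1" for t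
  proof (rule Delta_midext_round_le[OF _ _ \<open>n \<ge> 1\<close> midpoints])
    show "midext_round n (G t) (y (t - 1)) (y t)"
      using assms(3) that unfolding midext_exec_def by blast
    show "nonsplit n (G t)"
      using assms(2) that by blast
  qed
  moreover have "Delta n (y \<tau>) \<le> \<epsilon>"
    if "\<epsilon> > 0" "of_nat \<tau> \<ge> \<lceil>log r (Delta n (y 0) / \<epsilon>)\<rceil>" for \<epsilon> \<tau>
    using contraction_convergence_time[where Del = "\<lambda>t. Delta n (y t)", OF \<open>r > 1\<close> \<open>q * r = 1\<close>
        step Delta_nonneg[OF \<open>n \<ge> 1\<close>] that] .
  ultimately show ?thesis
    by blast
qed

theorem theorem1:
  fixes n :: nat and G :: "nat \<Rightarrow> (nat \<times> nat) set"
  assumes "n \<ge> 1"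
    and "\<forall>t\<ge>1. comm_graph n (G t) \<and> nonsplit n (G t)"
  shows "(\<forall>y :: nat \<Rightarrow> nat \<Rightarrow> 'v::real_inner. midext_exec n G y \<longrightarrow>
            (\<forall>t\<ge>1. Delta n (y t) \<le> sqrt (7/8) * Delta n (y (t - 1))) \<and>
            (\<forall>\<epsilon>>0. \<forall>\<tau>::nat.
               of_nat \<tau> \<ge> \<lceil>log (sqrt (8/7)) (Delta n (y 0) / \<epsilon>)\<rceil> \<longrightarrow> Delta n (y \<tau>) \<le> \<epsilon>))
       \<and> (\<forall>y :: nat \<Rightarrow> nat \<Rightarrow> real. midext_exec n G y \<longrightarrow>
            (\<forall>t\<ge>1. Delta n (y t) \<le> (1/2) * Delta n (y (t - 1))) \<and>
            (\<forall>\<epsilon>>0. \<forall>\<tau>::nat.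
               of_nat \<tau> \<ge> \<lceil>log 2 (Delta n (y 0) / \<epsilon>)\<rceil> \<longrightarrow> Delta n (y \<tau>) \<le> \<epsilon>))"
proof -
  have nonsplit: "\<forall>t\<ge>1. nonsplit n (G t)"
    using assms(2) by blast
  have inner_rate: "sqrt (8/7) > (1::real)" "sqrt (7/8) * sqrt (8/7) = (1::real)"
    by (simp_all flip: real_sqrt_mult)
  have real_rate: "(2::real) > 1" "1/2 * 2 = (1::real)"
    by simp_all
  show ?thesis
    apply (rule conjI; intro allI impI)
    subgoal
      by (rule midext_exec_contraction[OF assms(1) nonsplit _ inner_rate];
          (assumption | rule dist_midpoints_le_inner))
    subgoal
      by (rule midext_exec_contraction[OF assms(1) nonsplit _ real_rate];
          (assumption | rule dist_midpoints_le_real))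
    done
qed

end
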